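(* Let $1\le p<\infty$ and let $n\ge m\ge 0$ be integers with $n-m\equiv 0\pmod 2$. Then $$\left[\sum_{i=0}^{\frac{n-m-2}{2}}2\binom{n}{i}^p+\sum_{i=0}^{m}\left[\binom{m}{i}+\binom{n}{\frac{n-m}{2}+i}\right]^p\right]^{1/p} \le \Big[\sum_{i=0}^{n}\binom{n}{i}^p\Big]^{1/p}+\Big[\sum_{i=0}^{m}\binom{m}{i}^p\Big]^{1/p},$$ where the first sum on the left is empty (zero) when $n=m$.
   Context: Binomial coefficients have their usual meaning. *)

theory Defs
  imports Complex_Main
begin

end

(*  Place row m of Pascal's triangle centred under row n, i.e. shifted by k = (n - m) / 2.
    Adding the two rows entrywise gives the vector whose l^p norm is the left-hand side:
    the k outer entries on each side are binomial coefficients of row n alone (paired up by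
    the symmetry of row n), the middle m + 1 entries are sums.  The inequality is then
    Minkowski's inequality for these two vectors, which follows from convexity of the
    unit ball of l^p, i.e. from convexity of x powr p on [0, \<infinity>).  *)

theory Submission
  imports Defs "HOL-Analysis.Convex"
begin

lemma convex_on_powr_nonneg:
  fixes p :: real
  assumes "p \<ge> 1"
  shows "convex_on {0..} (\<lambda>x. x powr p)"
proof (rule convex_onI)
  have scaled: "(t * y) powr p \<le> t * y powr p" if "0 \<le> t" "t \<le> 1" "y \<ge> 0" for t y :: real
  proof -
    have "t powr p \<le> t"
      using powr_mono'[of 1 p t] that assms by (cases "t = 0") auto
    then show ?thesis
      using that by (simp add: powr_mult mult_right_mono)
  qed
  fix t x y :: real
  assume t: "0 < t" "t < 1" and xy: "x \<in> {0..}" "y \<in> {0..}"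
  consider "x = 0" | "y = 0" | "x > 0" "y > 0"
    using xy by fastforce
  then show "((1 - t) *\<^sub>R x + t *\<^sub>R y) powr p \<le> (1 - t) * x powr p + t * y powr p"
  proof cases
    case 1
    then show ?thesis using scaled[of t y] t xy by simp
  next
    case 2
    then show ?thesis using scaled[of "1 - t" x] t xy by simp
  next
    case 3
    then show ?thesis
      using convex_onD[OF powr_convex[OF assms], of t x y] t by simp
  qed
qed simp

lemma sum_powr_convex_combination_le_one:
  fixes u v :: "'a \<Rightarrow> real" and p t :: real
  assumes "finite S" "p \<ge> 1" "0 \<le> t" "t \<le> 1"
    and "\<And>i. i \<in> S \<Longrightarrow> u i \<ge> 0" "\<And>i. i \<in> S \<Longrightarrow> v i \<ge> 0"
    and "(\<Sum>i\<in>S. u i powr p) = 1" "(\<Sum>i\<in>S. v i powr p) = 1"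
  shows "(\<Sum>i\<in>S. ((1 - t) * u i + t * v i) powr p) \<le> 1"
proof -
  have "(\<Sum>i\<in>S. ((1 - t) * u i + t * v i) powr p) \<le> (\<Sum>i\<in>S. (1 - t) * u i powr p + t * v i powr p)"
    using convex_onD[OF convex_on_powr_nonneg[OF assms(2)]] assms(3-6)
    by (intro sum_mono) simp
  also have "\<dots> = 1"
    using assms(7,8) by (simp add: sum.distrib flip: sum_distrib_left)
  finally show ?thesis .
qed

lemma sum_powr_eq_0_imp:
  fixes a :: "'a \<Rightarrow> real"
  assumes "finite S" "\<And>i. i \<in> S \<Longrightarrow> a i \<ge> 0" "(\<Sum>i\<in>S. a i powr p) powr (1/p) = 0" "i \<in> S"
  shows "a i = 0"
  using assms sum_nonneg_eq_0_iff[of S "\<lambda>i. a i powr p"] by simp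

theorem Minkowski_sum_powr:
  fixes a b :: "'a \<Rightarrow> real" and p :: real
  assumes "finite S" "p \<ge> 1" "\<And>i. i \<in> S \<Longrightarrow> a i \<ge> 0" "\<And>i. i \<in> S \<Longrightarrow> b i \<ge> 0"
  shows "(\<Sum>i\<in>S. (a i + b i) powr p) powr (1/p)
     \<le> (\<Sum>i\<in>S. a i powr p) powr (1/p) + (\<Sum>i\<in>S. b i powr p) powr (1/p)"
proof -
  define A where "A = (\<Sum>i\<in>S. a i powr p) powr (1/p)"
  define B where "B = (\<Sum>i\<in>S. b i powr p) powr (1/p)"
  have norm_powr: "(\<Sum>i\<in>S. (c i / C) powr p) = 1"
    if "C = (\<Sum>i\<in>S. c i powr p) powr (1/p)" "C \<noteq> 0" "\<And>i. i \<in> S \<Longrightarrow> c i \<ge> 0" for c C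
  proof -
    have "C powr p = (\<Sum>i\<in>S. c i powr p)"
      using that assms(2) by (simp add: powr_powr sum_nonneg)
    then show ?thesis
      using that by (simp add: powr_divide sum_divide_distrib[symmetric])
  qed
  show ?thesis
  proof (cases "A = 0 \<or> B = 0")
    case True
    then have "(\<forall>i\<in>S. a i = 0) \<or> (\<forall>i\<in>S. b i = 0)"
      using sum_powr_eq_0_imp[OF assms(1)] assms(3,4) unfolding A_def B_def by blast
    then show ?thesis by auto
  next
    case False
    then have pos: "A > 0" "B > 0"
      unfolding A_def B_def by auto
    \<comment> \<open>(a + b) / (A + B) is a convex combination of the unit vectors a / A and b / B.\<close>
    define t where "t = B / (A + B)"
    have "1 - t = A / (A + B)"
      using pos by (simp add: t_def field_simps)
    then have "(a i + b i) / (A + B) = (1 - t) * (a i / A) + t * (b i / B)" for i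
      using pos by (simp add: t_def add_divide_distrib)
    moreover have "t \<le> 1"
      using pos by (simp add: t_def)
    ultimately have "(\<Sum>i\<in>S. ((a i + b i) / (A + B)) powr p) \<le> 1"
      using pos assms norm_powr[OF A_def] norm_powr[OF B_def]
      by (simp only:) (intro sum_powr_convex_combination_le_one, auto simp: t_def)
    then have "(\<Sum>i\<in>S. (a i + b i) powr p) \<le> (A + B) powr p"
      using pos assms(3,4)
      by (simp add: powr_divide sum_divide_distrib[symmetric] divide_le_eq)
    then have "(\<Sum>i\<in>S. (a i + b i) powr p) powr (1/p) \<le> ((A + B) powr p) powr (1/p)"
      using assms by (intro powr_mono2) (auto intro: sum_nonneg)
    also have "\<dots> = A + B"
      using pos assms(2) by (simp add: powr_powr)
    finally show ?thesis
      unfolding A_def B_def .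
  qed
qed

lemma sum_binomial_row_plus_centred_row:
  fixes g :: "nat \<Rightarrow> nat \<Rightarrow> real"
  assumes n: "n = k + m + k"
  shows "(\<Sum>i=0..n. g (n choose i) (if k \<le> i then m choose (i - k) else 0))
       = 2 * (\<Sum>i<k. g (n choose i) 0) + (\<Sum>i=0..m. g (n choose (k + i)) (m choose i))"
proof -
  let ?h = "\<lambda>i. g (n choose i) (if k \<le> i then m choose (i - k) else 0)"
  have blocks: "{0..n} = {..<k} \<union> {k..k + m} \<union> {k + m<..n}"
    using n by auto
  have "(\<Sum>i=0..n. ?h i) = (\<Sum>i<k. ?h i) + (\<Sum>i=k..k + m. ?h i) + (\<Sum>i\<in>{k + m<..n}. ?h i)"
    unfolding blocks by (subst sum.union_disjoint; auto)+
  moreover have "(\<Sum>i<k. ?h i) = (\<Sum>i<k. g (n choose i) 0)"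
    by simp
  moreover have "(\<Sum>i=k..k + m. ?h i) = (\<Sum>i=0..m. g (n choose (k + i)) (m choose i))"
    using sum.shift_bounds_cl_nat_ivl[of ?h 0 k m] by (simp add: add.commute)
  moreover have "(\<Sum>i\<in>{k + m<..n}. ?h i) = (\<Sum>i<k. g (n choose i) 0)"
    by (rule sum.reindex_bij_witness[where i="\<lambda>j. n - j" and j="\<lambda>j. n - j"])
       (use n in \<open>auto simp: binomial_eq_0 binomial_symmetric[symmetric]\<close>)
  ultimately show ?thesis
    by simp
qed

theorem mainTheorem19:
  fixes p :: real and n m :: nat
  assumes "1 \<le> p" and "m \<le> n" and "even (n - m)"
  shows "((\<Sum>i<(n - m) div 2. 2 * real (n choose i) powr p)
          + (\<Sum>i=0..m. (real (m choose i) + real (n choose ((n - m) div 2 + i))) powr p)) powr (1 / p)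
         \<le> (\<Sum>i=0..n. real (n choose i) powr p) powr (1 / p)
           + (\<Sum>i=0..m. real (m choose i) powr p) powr (1 / p)"
proof -
  define k where "k = (n - m) div 2"
  \<comment> \<open>No bound on i is needed: m choose (i - k) vanishes once i > k + m.\<close>
  define centred where "centred i = (if k \<le> i then m choose (i - k) else 0)" for i
  have n: "n = k + m + k"
    using assms(2,3) unfolding k_def by presburger
  have "(\<Sum>i=0..n. (real (n choose i) + real (centred i)) powr p) powr (1/p)
     \<le> (\<Sum>i=0..n. real (n choose i) powr p) powr (1/p) + (\<Sum>i=0..n. real (centred i) powr p) powr (1/p)"
    using assms(1) by (intro Minkowski_sum_powr) auto
  moreover have "(\<Sum>i=0..n. (real (n choose i) + real (centred i)) powr p)
      = (\<Sum>i<k. 2 * real (n choose i) powr p)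
        + (\<Sum>i=0..m. (real (m choose i) + real (n choose (k + i))) powr p)"
    using sum_binomial_row_plus_centred_row[OF n, of "\<lambda>x y. (real x + real y) powr p"]
    by (simp add: centred_def sum_distrib_left add.commute)
  moreover have "(\<Sum>i=0..n. real (centred i) powr p) = (\<Sum>i=0..m. real (m choose i) powr p)"
    using sum_binomial_row_plus_centred_row[OF n, of "\<lambda>x y. real y powr p"]
    by (simp add: centred_def)
  ultimately show ?thesis
    unfolding k_def by simp
qed

end
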